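(* Let $A\subset\mathbb R^n$ be any set and $f:A\to\mathbb R$. Assume there is a constant $C>0$ and for each $p\in A$ a vector $a_p\in\mathbb R^n$ such that $$f(p)+\langle x-p,a_p\rangle-\tfrac C2\|x-p\|^2\le f(x)\le f(p)+\langle x-p,a_p\rangle+\tfrac C2\|x-p\|^2\quad\text{for all }x\in A,$$ and such that for all $p,q\in A$ and all $x\in\mathbb R^n$ $$f(p)+\langle x-p,a_p\rangle-\tfrac C2\|x-p\|^2\le f(q)+\langle x-q,a_q\rangle+\tfrac C2\|x-q\|^2.$$ Then there is a function $F:\mathbb R^n\to\mathbb R$ of class $C^{1,1}$ whose restriction to $A$ is $f$.
   Context: No closedness or measurability of $A$ and no continuity of $f$ or of $p\mapsto a_p$ is assumed. $C^{1,1}$ means continuously differentiable with locally Lipschitz derivative. *)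

theory Defs
  imports "HOL-Analysis.Analysis"
begin

definition C11 :: "('a::euclidean_space \<Rightarrow> real) \<Rightarrow> bool" where
  "C11 F \<longleftrightarrow> (\<exists>G :: 'a \<Rightarrow> 'a.
      (\<forall>x. (F has_derivative (\<lambda>h. G x \<bullet> h)) (at x)) \<and>
      continuous_on UNIV G \<and>
      (\<forall>x. \<exists>r>0. \<exists>L. \<forall>y\<in>ball x r. \<forall>z\<in>ball x r. norm (G y - G z) \<le> L * norm (y - z)))"

end

theory Submission
  imports Defs
begin

text \<open>Adding \<open>C/2 |x|\<^sup>2\<close> turns the two-sided Taylor bounds into a convexity problem.
The upper paraboloids, lifted in this way, become \<open>P\<^sub>q(x) = f q + \<langle>x - q, a q\<rangle> + C/2 |x - q|\<^sup>2 + C/2 |x|\<^sup>2\<close>,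
which all satisfy \<open>P\<^sub>q(x + h) + P\<^sub>q(x - h) = 2 P\<^sub>q(x) + 2C |h|\<^sup>2\<close>, and the lower paraboloids
become affine functions; the hypothesis says that each of them lies below every \<open>P\<^sub>q\<close>.
Let \<open>\<phi>\<close> be the supremum of all affine functions lying below every \<open>P\<^sub>q\<close>.  Then
\<open>\<phi> = f + C/2 |.|\<^sup>2\<close> on \<open>A\<close>, at every point some affine minorant touches \<open>\<phi>\<close> (a maximising
one exists by compactness), and the identity above passes to the supremum as
\<open>\<phi>(x + h) + \<phi>(x - h) \<le> 2 \<phi>(x) + 2C |h|\<^sup>2\<close>.  Squeezed between its supporting hyperplanes
and this bound, \<open>\<phi>\<close> is \<open>C11\<close>, and so is \<open>F = \<phi> - C/2 |.|\<^sup>2\<close>.\<close>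

lemma has_derivative_of_quadratic_approx:
  fixes F :: "'a::real_inner \<Rightarrow> real"
  assumes approx: "\<And>y. \<bar>F y - F x - g \<bullet> (y - x)\<bar> \<le> K * (norm (y - x))\<^sup>2"
  shows "(F has_derivative (\<lambda>h. g \<bullet> h)) (at x)"
proof -
  have "((\<lambda>y. norm (F y - F x - g \<bullet> (y - x)) / norm (y - x)) \<longlongrightarrow> 0) (at x)"
  proof (rule Lim_null_comparison)
    have "norm (norm (F y - F x - g \<bullet> (y - x)) / norm (y - x)) \<le> K * norm (y - x)" for y
      using approx[of y]
      by (cases "y = x") (simp_all add: divide_le_eq power2_eq_square mult.assoc)
    then show "\<forall>\<^sub>F y in at x. norm (norm (F y - F x - g \<bullet> (y - x)) / norm (y - x))
        \<le> K * norm (y - x)"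
      by simp
    have "((\<lambda>y. K * norm (y - x)) \<longlongrightarrow> K * norm (x - x)) (at x)"
      by (intro tendsto_intros)
    then show "((\<lambda>y. K * norm (y - x)) \<longlongrightarrow> 0) (at x)"
      by simp
  qed
  then show ?thesis
    by (simp add: has_derivative_iff_norm bounded_linear_inner_right)
qed

lemma lipschitz_gradient_of_quadratic_approx:
  fixes F :: "'a::real_inner \<Rightarrow> real"
  assumes "K \<ge> 0"
    and approx: "\<And>x y. \<bar>F y - F x - D x \<bullet> (y - x)\<bar> \<le> K * (norm (y - x))\<^sup>2"
  shows "(6 * K)-lipschitz_on UNIV D"
proof (rule lipschitz_onI)
  fix x y :: 'a
  show "dist (D x) (D y) \<le> 6 * K * dist x y"
  proof (cases "D x = D y")
    case True
    then show ?thesis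
      using \<open>K \<ge> 0\<close> by simp
  next
    case False
    define d where "d = D x - D y"
    define t where "t = norm (x - y)"
    have "norm d > 0" "t > 0"
      using False by (auto simp: d_def t_def)
    define z where "z = y + (t / norm d) *\<^sub>R d"
    have zy: "norm (z - y) = t"
      using \<open>norm d > 0\<close> \<open>t > 0\<close> by (simp add: z_def)
    have "norm (z - x) \<le> 2 * t"
      using norm_triangle_ineq[of "z - y" "y - x"] zy by (simp add: t_def norm_minus_commute)
    then have zx: "(norm (z - x))\<^sup>2 \<le> 4 * t\<^sup>2"
      using power_mono[of "norm (z - x)" "2 * t" 2] by (simp add: power2_eq_square)
    have "t * norm d = d \<bullet> (z - y)"
      using \<open>norm d > 0\<close> by (simp add: z_def inner_commute dot_square_norm power2_eq_square)
    also have "\<dots> = D x \<bullet> (z - x) - D x \<bullet> (y - x) - D y \<bullet> (z - y)"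
      by (simp add: d_def inner_diff_left inner_diff_right)
    also have "\<dots> \<le> K * ((norm (z - x))\<^sup>2 + (norm (z - y))\<^sup>2 + (norm (y - x))\<^sup>2)"
      using approx[where x = x and y = z] approx[where x = y and y = z] approx[where x = x and y = y]
      by (simp add: abs_le_iff algebra_simps)
    also have "\<dots> \<le> K * (6 * t\<^sup>2)"
      using zx zy \<open>K \<ge> 0\<close> by (intro mult_left_mono) (auto simp: t_def norm_minus_commute)
    finally have "norm d \<le> 6 * K * t"
      using \<open>t > 0\<close> by (simp add: power2_eq_square mult_le_cancel_left_pos algebra_simps)
    then show ?thesis
      by (simp add: d_def t_def dist_norm)
  qed
qed (use assms in simp)

lemma C11_of_quadratic_approx:
  fixes F :: "'a::euclidean_space \<Rightarrow> real"
  assumes "K \<ge> 0"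
    and approx: "\<And>x y. \<bar>F y - F x - D x \<bullet> (y - x)\<bar> \<le> K * (norm (y - x))\<^sup>2"
  shows "C11 F"
  unfolding C11_def
proof (intro exI[of _ D] conjI allI)
  have lip: "(6 * K)-lipschitz_on UNIV D"
    using assms by (rule lipschitz_gradient_of_quadratic_approx)
  show "(F has_derivative (\<lambda>h. D x \<bullet> h)) (at x)" for x
    using approx by (rule has_derivative_of_quadratic_approx)
  show "continuous_on UNIV D"
    using lip by (rule lipschitz_on_continuous_on)
  show "\<exists>r>0. \<exists>L. \<forall>y\<in>ball x r. \<forall>z\<in>ball x r. norm (D y - D z) \<le> L * norm (y - z)" for x
    using lipschitz_on_normD[OF lip] by (intro exI[of _ 1] conjI exI[of _ "6 * K"]) auto
qed

lemma C11_add: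
  fixes F1 F2 :: "'a::euclidean_space \<Rightarrow> real"
  assumes "C11 F1" "C11 F2"
  shows "C11 (\<lambda>x. F1 x + F2 x)"
proof -
  obtain G1 where G1: "\<And>x. (F1 has_derivative (\<lambda>h. G1 x \<bullet> h)) (at x)" "continuous_on UNIV G1"
    "\<And>x. \<exists>r>0. \<exists>L. \<forall>y\<in>ball x r. \<forall>z\<in>ball x r. norm (G1 y - G1 z) \<le> L * norm (y - z)"
    using assms(1) unfolding C11_def by blast
  obtain G2 where G2: "\<And>x. (F2 has_derivative (\<lambda>h. G2 x \<bullet> h)) (at x)" "continuous_on UNIV G2"
    "\<And>x. \<exists>r>0. \<exists>L. \<forall>y\<in>ball x r. \<forall>z\<in>ball x r. norm (G2 y - G2 z) \<le> L * norm (y - z)"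
    using assms(2) unfolding C11_def by blast
  show ?thesis
    unfolding C11_def
  proof (intro exI[of _ "\<lambda>x. G1 x + G2 x"] conjI allI)
    show "((\<lambda>x. F1 x + F2 x) has_derivative (\<lambda>h. (G1 x + G2 x) \<bullet> h)) (at x)" for x
      using has_derivative_add[OF G1(1) G2(1)] by (simp add: inner_add_left)
    show "continuous_on UNIV (\<lambda>x. G1 x + G2 x)"
      using G1(2) G2(2) by (rule continuous_on_add)
    fix x
    obtain r1 L1 where r1: "r1 > 0"
      "\<And>y z. y \<in> ball x r1 \<Longrightarrow> z \<in> ball x r1 \<Longrightarrow> norm (G1 y - G1 z) \<le> L1 * norm (y - z)"
      using G1(3) by blast
    obtain r2 L2 where r2: "r2 > 0"
      "\<And>y z. y \<in> ball x r2 \<Longrightarrow> z \<in> ball x r2 \<Longrightarrow> norm (G2 y - G2 z) \<le> L2 * norm (y - z)"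
      using G2(3) by blast
    have "norm (G1 y + G2 y - (G1 z + G2 z)) \<le> (L1 + L2) * norm (y - z)"
      if "y \<in> ball x (min r1 r2)" "z \<in> ball x (min r1 r2)" for y z
    proof -
      have "norm (G1 y + G2 y - (G1 z + G2 z)) \<le> norm (G1 y - G1 z) + norm (G2 y - G2 z)"
        by (metis add_diff_add norm_triangle_ineq)
      also have "\<dots> \<le> (L1 + L2) * norm (y - z)"
        using r1(2)[of y z] r2(2)[of y z] that by (simp add: distrib_right)
      finally show ?thesis .
    qed
    then show "\<exists>r>0. \<exists>L. \<forall>y\<in>ball x r. \<forall>z\<in>ball x r.
        norm (G1 y + G2 y - (G1 z + G2 z)) \<le> L * norm (y - z)"
      using r1(1) r2(1) by (metis min_less_iff_conj)
  qed
qed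

lemma C11_scaled_sq_norm: "C11 (\<lambda>x::'a::euclidean_space. c * (norm x)\<^sup>2)"
proof (rule C11_of_quadratic_approx[where K = "\<bar>c\<bar>" and D = "\<lambda>x. (2 * c) *\<^sub>R x"])
  fix x y :: 'a
  have "c * (norm y)\<^sup>2 - c * (norm x)\<^sup>2 - (2 * c) *\<^sub>R x \<bullet> (y - x) = c * (norm (y - x))\<^sup>2"
    by (simp add: power2_norm_eq_inner inner_diff_left inner_diff_right inner_commute algebra_simps)
  then show "\<bar>c * (norm y)\<^sup>2 - c * (norm x)\<^sup>2 - (2 * c) *\<^sub>R x \<bullet> (y - x)\<bar> \<le> \<bar>c\<bar> * (norm (y - x))\<^sup>2"
    by (simp add: abs_mult)
qed simp

definition affine_minorants :: "('a::real_inner \<Rightarrow> real) set \<Rightarrow> (real \<times> 'a) set" where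
  "affine_minorants U = {(c, w). \<forall>u\<in>U. \<forall>z. c + w \<bullet> z \<le> u z}"

definition convex_envelope :: "('a::real_inner \<Rightarrow> real) set \<Rightarrow> 'a \<Rightarrow> real" where
  "convex_envelope U x = (SUP (c, w)\<in>affine_minorants U. c + w \<bullet> x)"

lemma affine_minorant_le_convex_envelope:
  assumes "u \<in> U" and "(c, w) \<in> affine_minorants U"
  shows "c + w \<bullet> x \<le> convex_envelope U x"
  unfolding convex_envelope_def
proof (rule cSup_upper)
  show "c + w \<bullet> x \<in> (\<lambda>(c, w). c + w \<bullet> x) ` affine_minorants U"
    using assms(2) by force
  show "bdd_above ((\<lambda>(c, w). c + w \<bullet> x) ` affine_minorants U)"
    using assms(1) by (intro bdd_aboveI[of _ "u x"]) (auto simp: affine_minorants_def)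
qed

lemma convex_envelope_least:
  assumes "affine_minorants U \<noteq> {}"
    and "\<And>c w. (c, w) \<in> affine_minorants U \<Longrightarrow> c + w \<bullet> x \<le> M"
  shows "convex_envelope U x \<le> M"
  unfolding convex_envelope_def using assms by (intro cSup_least) auto

lemma convex_envelope_le:
  assumes "affine_minorants U \<noteq> {}" and "u \<in> U"
  shows "convex_envelope U x \<le> u x"
  using assms by (intro convex_envelope_least) (auto simp: affine_minorants_def)

lemma closed_affine_minorants: "closed (affine_minorants U)"
proof -
  have "affine_minorants U = (\<Inter>u\<in>U. \<Inter>z. {p. fst p + snd p \<bullet> z \<le> u z})"
    by (auto simp: affine_minorants_def)
  then show ?thesis
    by (auto intro!: closed_INT closed_Collect_le continuous_intros)
qed

lemma bounded_affine_minorants_value_ge: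
  assumes "u \<in> U" and bound: "\<And>z. z \<in> cball x 1 \<Longrightarrow> u z \<le> B"
  shows "bounded {(c, w) \<in> affine_minorants U. t \<le> c + w \<bullet> x}"
proof -
  have "norm (c, w) \<le> \<bar>t\<bar> + \<bar>B\<bar> + (B - t) * norm x + (B - t)"
    if "(c, w) \<in> affine_minorants U" and t: "t \<le> c + w \<bullet> x" for c w
  proof -
    have below: "c + w \<bullet> z \<le> B" if "z \<in> cball x 1" for z
    proof -
      have "c + w \<bullet> z \<le> u z"
        using \<open>(c, w) \<in> affine_minorants U\<close> \<open>u \<in> U\<close> by (auto simp: affine_minorants_def)
      then show ?thesis
        using bound[OF that] by simp
    qed
    have w: "norm w \<le> B - t"
    proof (cases "w = 0")
      case True
      then show ?thesis
        using below[of x] t by simp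
    next
      case False
      have "c + w \<bullet> (x + (1 / norm w) *\<^sub>R w) = c + w \<bullet> x + norm w"
        using False by (simp add: inner_add_right dot_square_norm power2_eq_square)
      then show ?thesis
        using below[of "x + (1 / norm w) *\<^sub>R w"] False t by (simp add: dist_norm)
    qed
    have "\<bar>c\<bar> \<le> \<bar>c + w \<bullet> x\<bar> + \<bar>w \<bullet> x\<bar>"
      by linarith
    also have "\<dots> \<le> \<bar>t\<bar> + \<bar>B\<bar> + norm w * norm x"
      using t below[of x] Cauchy_Schwarz_ineq2[of w x] by simp
    also have "\<dots> \<le> \<bar>t\<bar> + \<bar>B\<bar> + (B - t) * norm x"
      using w by (simp add: mult_right_mono)
    finally show ?thesis
      using norm_Pair_le[of c w] w by simp
  qed
  then show ?thesis
    unfolding bounded_iff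
    by (intro exI[of _ "\<bar>t\<bar> + \<bar>B\<bar> + (B - t) * norm x + (B - t)"]) auto
qed

lemma compact_affine_minorants_value_ge:
  fixes U :: "('a::euclidean_space \<Rightarrow> real) set"
  assumes "u \<in> U" and "continuous_on (cball x 1) u"
  shows "compact {(c, w) \<in> affine_minorants U. t \<le> c + w \<bullet> x}"
proof -
  obtain B where "\<And>z. z \<in> cball x 1 \<Longrightarrow> u z \<le> B"
    using compact_imp_bounded[OF compact_continuous_image[OF assms(2) compact_cball]]
    unfolding bounded_iff by (metis abs_le_D1 image_eqI real_norm_def)
  then have "bounded {(c, w) \<in> affine_minorants U. t \<le> c + w \<bullet> x}"
    by (rule bounded_affine_minorants_value_ge[OF assms(1)])
  moreover have "closed {(c, w) \<in> affine_minorants U. t \<le> c + w \<bullet> x}"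
  proof -
    have "{(c, w) \<in> affine_minorants U. t \<le> c + w \<bullet> x}
        = affine_minorants U \<inter> {p. t \<le> fst p + snd p \<bullet> x}"
      by auto
    then show ?thesis
      by (auto intro!: closed_affine_minorants closed_Collect_le continuous_intros)
  qed
  ultimately show ?thesis
    by (simp add: compact_eq_bounded_closed)
qed

lemma convex_envelope_attained:
  fixes U :: "('a::euclidean_space \<Rightarrow> real) set"
  assumes "u \<in> U" and "continuous_on (cball x 1) u" and "affine_minorants U \<noteq> {}"
  shows "\<exists>c w. (c, w) \<in> affine_minorants U \<and> c + w \<bullet> x = convex_envelope U x"
proof -
  let ?v = "\<lambda>p. fst p + snd p \<bullet> x"
  define T where "T = {(c, w) \<in> affine_minorants U. convex_envelope U x - 1 \<le> c + w \<bullet> x}"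
  have "compact T"
    unfolding T_def using assms(1,2) by (rule compact_affine_minorants_value_ge)
  moreover have "T \<noteq> {}"
  proof -
    have "convex_envelope U x - 1 < Sup ((\<lambda>(c, w). c + w \<bullet> x) ` affine_minorants U)"
      by (simp add: convex_envelope_def)
    from less_cSupD[OF _ this] obtain c w
      where "(c, w) \<in> affine_minorants U" "convex_envelope U x - 1 < c + w \<bullet> x"
      using assms(3) by auto
    then have "(c, w) \<in> T"
      by (simp add: T_def)
    then show ?thesis
      by blast
  qed
  moreover have "continuous_on T ?v"
    by (intro continuous_intros)
  ultimately obtain pm where pm: "pm \<in> T" and max: "\<And>p. p \<in> T \<Longrightarrow> ?v p \<le> ?v pm"
    using continuous_attains_sup[of T ?v] by blast
  have "convex_envelope U x \<le> ?v pm"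
  proof (rule convex_envelope_least[OF assms(3)])
    fix c w
    assume "(c, w) \<in> affine_minorants U"
    then show "c + w \<bullet> x \<le> ?v pm"
      using max[of "(c, w)"] pm by (cases "(c, w) \<in> T") (auto simp: T_def)
  qed
  moreover have "?v pm \<le> convex_envelope U x"
    using pm affine_minorant_le_convex_envelope[OF assms(1)] by (auto simp: T_def)
  ultimately show ?thesis
    using pm by (intro exI[of _ "fst pm"] exI[of _ "snd pm"]) (auto simp: T_def)
qed

lemma affine_minorants_translate_average:
  assumes semiconcave: "\<And>u z. u \<in> U \<Longrightarrow> u (z + h) + u (z - h) \<le> 2 * u z + K * (norm h)\<^sup>2"
    and "(c1, w1) \<in> affine_minorants U" and "(c2, w2) \<in> affine_minorants U"
  shows "((c1 + w1 \<bullet> h + c2 - w2 \<bullet> h - K * (norm h)\<^sup>2) / 2, (1 / 2) *\<^sub>R (w1 + w2))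
    \<in> affine_minorants U"
proof -
  have "(c1 + w1 \<bullet> h + c2 - w2 \<bullet> h - K * (norm h)\<^sup>2) / 2 + ((1 / 2) *\<^sub>R (w1 + w2)) \<bullet> z \<le> u z"
    if "u \<in> U" for u z
  proof -
    have "c1 + w1 \<bullet> (z + h) \<le> u (z + h)" "c2 + w2 \<bullet> (z - h) \<le> u (z - h)"
      using assms(2,3) that by (auto simp: affine_minorants_def)
    then show ?thesis
      using semiconcave[OF that, of z]
      by (simp add: inner_add_left inner_add_right inner_diff_right field_simps)
  qed
  then show ?thesis
    by (simp add: affine_minorants_def)
qed

lemma convex_envelope_semiconcave:
  assumes "u \<in> U" and "affine_minorants U \<noteq> {}"
    and semiconcave: "\<And>u z. u \<in> U \<Longrightarrow> u (z + h) + u (z - h) \<le> 2 * u z + K * (norm h)\<^sup>2"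
  shows "convex_envelope U (x + h) + convex_envelope U (x - h)
    \<le> 2 * convex_envelope U x + K * (norm h)\<^sup>2"
proof -
  have combine: "c1 + w1 \<bullet> (x + h) + (c2 + w2 \<bullet> (x - h)) \<le> 2 * convex_envelope U x + K * (norm h)\<^sup>2"
    if "(c1, w1) \<in> affine_minorants U" and "(c2, w2) \<in> affine_minorants U" for c1 w1 c2 w2
    using affine_minorant_le_convex_envelope[OF assms(1)
        affine_minorants_translate_average[OF semiconcave that], of x]
    by (simp add: inner_add_left inner_add_right inner_diff_right field_simps)
  have bound: "convex_envelope U (x + h) \<le> 2 * convex_envelope U x + K * (norm h)\<^sup>2 - (c2 + w2 \<bullet> (x - h))"
    if "(c2, w2) \<in> affine_minorants U" for c2 w2
  proof (rule convex_envelope_least[OF assms(2)])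
    fix c1 w1
    assume "(c1, w1) \<in> affine_minorants U"
    from combine[OF this that] show "c1 + w1 \<bullet> (x + h)
        \<le> 2 * convex_envelope U x + K * (norm h)\<^sup>2 - (c2 + w2 \<bullet> (x - h))"
      by simp
  qed
  have "convex_envelope U (x - h) \<le> 2 * convex_envelope U x + K * (norm h)\<^sup>2 - convex_envelope U (x + h)"
  proof (rule convex_envelope_least[OF assms(2)])
    fix c2 w2
    assume "(c2, w2) \<in> affine_minorants U"
    from bound[OF this] show "c2 + w2 \<bullet> (x - h)
        \<le> 2 * convex_envelope U x + K * (norm h)\<^sup>2 - convex_envelope U (x + h)"
      by simp
  qed
  then show ?thesis
    by simp
qed

lemma C11_convex_envelope:
  fixes U :: "('a::euclidean_space \<Rightarrow> real) set"
  assumes "u \<in> U" and "continuous_on UNIV u" and "affine_minorants U \<noteq> {}" and "K \<ge> 0"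
    and semiconcave: "\<And>u z h. u \<in> U \<Longrightarrow> u (z + h) + u (z - h) \<le> 2 * u z + K * (norm h)\<^sup>2"
  shows "C11 (convex_envelope U)"
proof -
  let ?phi = "convex_envelope U"
  have "\<exists>w c. (c, w) \<in> affine_minorants U \<and> c + w \<bullet> x = ?phi x" for x
    using convex_envelope_attained[OF assms(1) continuous_on_subset[OF assms(2)] assms(3)] by blast
  then obtain G where G: "\<And>x. \<exists>c. (c, G x) \<in> affine_minorants U \<and> c + G x \<bullet> x = ?phi x"
    by metis
  have support: "?phi x + G x \<bullet> h \<le> ?phi (x + h)" for x h
  proof -
    obtain c where "(c, G x) \<in> affine_minorants U" "c + G x \<bullet> x = ?phi x"
      using G by blast
    then show ?thesis
      using affine_minorant_le_convex_envelope[OF assms(1), of c "G x" "x + h"]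
      by (simp add: inner_add_right)
  qed
  have approx: "\<bar>?phi (x + h) - ?phi x - G x \<bullet> h\<bar> \<le> K * (norm h)\<^sup>2" for x h
    using support[of x h] support[of x "- h"]
      convex_envelope_semiconcave[OF assms(1,3) semiconcave, of x h]
    by (simp add: abs_le_iff)
  have "\<bar>?phi y - ?phi x - G x \<bullet> (y - x)\<bar> \<le> K * (norm (y - x))\<^sup>2" for x y
    using approx[of x "y - x"] by simp
  then show ?thesis
    using assms(4) by (intro C11_of_quadratic_approx)
qed

lemma parallelogram_law:
  fixes x y :: "'a::real_inner"
  shows "(norm (x + y))\<^sup>2 + (norm (x - y))\<^sup>2 = 2 * (norm x)\<^sup>2 + 2 * (norm y)\<^sup>2"
  by (simp add: power2_norm_eq_inner inner_add_left inner_add_right inner_diff_left inner_diff_right)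

definition lifted_paraboloid ::
    "real \<Rightarrow> ('a::real_inner \<Rightarrow> real) \<Rightarrow> ('a \<Rightarrow> 'a) \<Rightarrow> 'a \<Rightarrow> 'a \<Rightarrow> real" where
  "lifted_paraboloid C f a q z =
    f q + (z - q) \<bullet> a q + C / 2 * (norm (z - q))\<^sup>2 + C / 2 * (norm z)\<^sup>2"

lemma lifted_paraboloid_second_difference:
  "lifted_paraboloid C f a q (z + h) + lifted_paraboloid C f a q (z - h)
    = 2 * lifted_paraboloid C f a q z + 2 * C * (norm h)\<^sup>2"
proof -
  have shifted: "(norm (z + h - q))\<^sup>2 + (norm (z - h - q))\<^sup>2 = 2 * (norm (z - q))\<^sup>2 + 2 * (norm h)\<^sup>2"
    using parallelogram_law[of "z - q" h] by (simp add: algebra_simps)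
  have "lifted_paraboloid C f a q (z + h) + lifted_paraboloid C f a q (z - h)
      = 2 * f q + ((z + h - q) \<bullet> a q + (z - h - q) \<bullet> a q)
        + C / 2 * ((norm (z + h - q))\<^sup>2 + (norm (z - h - q))\<^sup>2)
        + C / 2 * ((norm (z + h))\<^sup>2 + (norm (z - h))\<^sup>2)"
    unfolding lifted_paraboloid_def by (simp add: algebra_simps)
  also have "\<dots> = 2 * lifted_paraboloid C f a q z + 2 * C * (norm h)\<^sup>2"
    unfolding shifted parallelogram_law lifted_paraboloid_def
    by (simp add: inner_diff_left inner_add_left algebra_simps)
  finally show ?thesis .
qed

lemma lifted_lower_paraboloid_affine_minorant:
  assumes "p \<in> A"
    and below: "\<And>q z. q \<in> A \<Longrightarrow>
      f p + (z - p) \<bullet> a p - C / 2 * (norm (z - p))\<^sup>2 \<le> f q + (z - q) \<bullet> a q + C / 2 * (norm (z - q))\<^sup>2"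
  shows "(f p - p \<bullet> a p - C / 2 * (norm p)\<^sup>2, a p + C *\<^sub>R p)
    \<in> affine_minorants (lifted_paraboloid C f a ` A)"
proof -
  have "f p - p \<bullet> a p - C / 2 * (norm p)\<^sup>2 + (a p + C *\<^sub>R p) \<bullet> z \<le> lifted_paraboloid C f a q z"
    if "q \<in> A" for q z
  proof -
    have "f p - p \<bullet> a p - C / 2 * (norm p)\<^sup>2 + (a p + C *\<^sub>R p) \<bullet> z
        = f p + (z - p) \<bullet> a p - C / 2 * (norm (z - p))\<^sup>2 + C / 2 * (norm z)\<^sup>2"
      by (simp add: power2_norm_eq_inner inner_diff_left inner_diff_right inner_add_left
          inner_commute algebra_simps)
    also have "\<dots> \<le> lifted_paraboloid C f a q z"
      using below[OF that, of z] by (simp add: lifted_paraboloid_def)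
    finally show ?thesis .
  qed
  then show ?thesis
    by (auto simp: affine_minorants_def)
qed

lemma C11_convex_envelope_lifted_paraboloids:
  fixes A :: "'a::euclidean_space set"
  assumes "C \<ge> 0" and "q0 \<in> A" and "affine_minorants (lifted_paraboloid C f a ` A) \<noteq> {}"
  shows "C11 (convex_envelope (lifted_paraboloid C f a ` A))"
proof (rule C11_convex_envelope[OF _ _ assms(3)])
  show "lifted_paraboloid C f a q0 \<in> lifted_paraboloid C f a ` A"
    using assms(2) by simp
  show "continuous_on UNIV (lifted_paraboloid C f a q0)"
    unfolding lifted_paraboloid_def by (intro continuous_intros)
  fix u z h
  assume "u \<in> lifted_paraboloid C f a ` A"
  then obtain q where "u = lifted_paraboloid C f a q"
    by blast
  then show "u (z + h) + u (z - h) \<le> 2 * u z + 2 * C * (norm h)\<^sup>2"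
    using lifted_paraboloid_second_difference[of C f a q z h] by simp
qed (use assms(1) in simp)

lemma convex_envelope_lifted_paraboloids_eq:
  assumes "p \<in> A"
    and below: "\<And>q z. q \<in> A \<Longrightarrow>
      f p + (z - p) \<bullet> a p - C / 2 * (norm (z - p))\<^sup>2 \<le> f q + (z - q) \<bullet> a q + C / 2 * (norm (z - q))\<^sup>2"
  shows "convex_envelope (lifted_paraboloid C f a ` A) p = f p + C / 2 * (norm p)\<^sup>2"
proof (rule antisym)
  note lower = lifted_lower_paraboloid_affine_minorant[OF assms]
  show "convex_envelope (lifted_paraboloid C f a ` A) p \<le> f p + C / 2 * (norm p)\<^sup>2"
    using convex_envelope_le[of _ "lifted_paraboloid C f a p" p] lower \<open>p \<in> A\<close>
    by (auto simp: lifted_paraboloid_def)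
  show "f p + C / 2 * (norm p)\<^sup>2 \<le> convex_envelope (lifted_paraboloid C f a ` A) p"
    using affine_minorant_le_convex_envelope[OF _ lower, of "lifted_paraboloid C f a p" p] \<open>p \<in> A\<close>
    by (simp add: inner_add_left dot_square_norm inner_commute algebra_simps)
qed

lemma C11_extension:
  fixes A :: "'a::euclidean_space set" and f :: "'a \<Rightarrow> real" and a :: "'a \<Rightarrow> 'a"
  assumes "C > 0"
    and paraboloids: "\<And>p q x. p \<in> A \<Longrightarrow> q \<in> A \<Longrightarrow>
           f p + (x - p) \<bullet> a p - C / 2 * (norm (x - p))\<^sup>2 \<le>
           f q + (x - q) \<bullet> a q + C / 2 * (norm (x - q))\<^sup>2"
  shows "\<exists>F. C11 F \<and> (\<forall>x\<in>A. F x = f x)"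
proof (cases "A = {}")
  case True
  then show ?thesis
    using C11_scaled_sq_norm[of 0] by auto
next
  case False
  then obtain q0 where "q0 \<in> A"
    by blast
  let ?\<phi> = "convex_envelope (lifted_paraboloid C f a ` A)"
  have "affine_minorants (lifted_paraboloid C f a ` A) \<noteq> {}"
    using lifted_lower_paraboloid_affine_minorant[OF \<open>q0 \<in> A\<close> paraboloids] \<open>q0 \<in> A\<close> by blast
  then have "C11 ?\<phi>"
    using \<open>C > 0\<close> \<open>q0 \<in> A\<close> by (intro C11_convex_envelope_lifted_paraboloids) auto
  then have "C11 (\<lambda>x. ?\<phi> x + - C / 2 * (norm x)\<^sup>2)"
    using C11_scaled_sq_norm by (rule C11_add)
  moreover have "?\<phi> p + - C / 2 * (norm p)\<^sup>2 = f p" if "p \<in> A" for p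
    using convex_envelope_lifted_paraboloids_eq[OF that paraboloids[OF that]] by simp
  ultimately show ?thesis
    by blast
qed

theorem mainTheorem17:
  fixes A :: "(real ^ 'n) set" and f :: "real ^ 'n \<Rightarrow> real"
    and a :: "real ^ 'n \<Rightarrow> real ^ 'n" and C :: real
  assumes "C > 0"
    and "\<And>p x. p \<in> A \<Longrightarrow> x \<in> A \<Longrightarrow>
           f p + (x - p) \<bullet> a p - C / 2 * (norm (x - p))\<^sup>2 \<le> f x \<and>
           f x \<le> f p + (x - p) \<bullet> a p + C / 2 * (norm (x - p))\<^sup>2"
    and "\<And>p q x. p \<in> A \<Longrightarrow> q \<in> A \<Longrightarrow>
           f p + (x - p) \<bullet> a p - C / 2 * (norm (x - p))\<^sup>2 \<le>
           f q + (x - q) \<bullet> a q + C / 2 * (norm (x - q))\<^sup>2"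
  shows "\<exists>F :: real ^ 'n \<Rightarrow> real. C11 F \<and> (\<forall>x\<in>A. F x = f x)"
  using assms(1,3) by (rule C11_extension)

end
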